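(* Let $K$ be a field, $w(x)\in K[x]$ with $d=\deg w\ge2$, $W=K[w(x)]\subseteq K[x]$, and $U$ the $K$-subspace of $K[x]$ spanned by $x^m$ for positive integers $m$ not divisible by $d$. Every $f\in K[x]$ can be written uniquely as $f=f_1+f_2$ with $f_1\in U$, $f_2\in W$; set $\ell(f)=\deg f_1$ if $f_1\ne0$ and $\ell(f)=0$ otherwise. Then: 1) $\deg f\ge \ell(f)$ for all nonzero $f\in K[x]$; 2) for all $f,g\in K[x]$ with $f-g\in W$, we have $\ell(f)=\ell(g)$. *)

theory Defs
  imports "HOL-Computational_Algebra.Polynomial"
begin

definition polyW :: "'a::field poly \<Rightarrow> 'a poly set" where
  "polyW w = {pcompose p w | p. True}"

text \<open>U = K-span of the monomials x^m with m > 0 and d not dividing m (d = deg w).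
  A polynomial lies in this span iff all its nonzero coefficients sit at such exponents.\<close>
definition polyU :: "'a::field poly \<Rightarrow> 'a poly set" where
  "polyU w = {p. \<forall>m. coeff p m \<noteq> 0 \<longrightarrow> 0 < m \<and> \<not> degree w dvd m}"

definition Ucomp :: "'a::field poly \<Rightarrow> 'a poly \<Rightarrow> 'a poly" where
  "Ucomp w f = (THE f1. f1 \<in> polyU w \<and> f - f1 \<in> polyW w)"

definition ell :: "'a::field poly \<Rightarrow> 'a poly \<Rightarrow> nat" where
  "ell w f = (if Ucomp w f \<noteq> 0 then degree (Ucomp w f) else 0)"

end

theory Submission
  imports Defs
begin

text \<open>The decomposition f = f_1 + f_2 exists by induction on the degree: the top term of f is
  cancelled by a monomial of U when d does not divide deg f, and by a scalar multiple of
  w^k \<in> W when deg f = d k; this never raises the degree of the U-part. Uniqueness holds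
  because a nonzero element of W = K[w] has degree divisible by d, while a nonzero element of U
  does not. Then f - g \<in> W forces f and g to have the same U-component.\<close>

lemma polyU_add:
  assumes "u1 \<in> polyU w" "u2 \<in> polyU w"
  shows "u1 + u2 \<in> polyU w"
proof -
  have "coeff (u1 + u2) m \<noteq> 0 \<Longrightarrow> coeff u1 m \<noteq> 0 \<or> coeff u2 m \<noteq> 0" for m
    by auto
  with assms show ?thesis
    unfolding polyU_def by blast
qed

lemma polyU_diff:
  assumes "u1 \<in> polyU w" "u2 \<in> polyU w"
  shows "u1 - u2 \<in> polyU w"
proof -
  have "coeff (u1 - u2) m \<noteq> 0 \<Longrightarrow> coeff u1 m \<noteq> 0 \<or> coeff u2 m \<noteq> 0" for m
    by auto
  with assms show ?thesis
    unfolding polyU_def by blast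
qed

lemma zero_in_polyU: "0 \<in> polyU w"
  by (simp add: polyU_def)

lemma monom_in_polyU: "0 < n \<Longrightarrow> \<not> degree w dvd n \<Longrightarrow> monom c n \<in> polyU w"
  by (simp add: polyU_def coeff_monom)

lemma polyW_add: "v1 \<in> polyW w \<Longrightarrow> v2 \<in> polyW w \<Longrightarrow> v1 + v2 \<in> polyW w"
  unfolding polyW_def by (auto simp flip: pcompose_add)

lemma polyW_diff: "v1 \<in> polyW w \<Longrightarrow> v2 \<in> polyW w \<Longrightarrow> v1 - v2 \<in> polyW w"
  unfolding polyW_def by (auto simp flip: pcompose_diff)

lemma const_in_polyW: "[:c:] \<in> polyW w"
  unfolding polyW_def by (auto intro: exI[of _ "[:c:]"])

lemma pcompose_x_power: "pcompose ([:0, 1:] ^ k) w = w ^ k"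
  by (induction k) (simp_all add: pcompose_mult pcompose_pCons pcompose_1)

lemma smult_power_in_polyW: "smult c (w ^ k) \<in> polyW w"
  unfolding polyW_def
  by (auto intro!: exI[of _ "smult c ([:0, 1:] ^ k)"] simp: pcompose_smult pcompose_x_power)

lemma polyU_inter_polyW:
  assumes "u \<in> polyU w" "u \<in> polyW w"
  shows "u = 0"
proof (rule ccontr)
  assume "u \<noteq> 0"
  with assms(1) have "0 < degree u" "\<not> degree w dvd degree u"
    by (auto simp: polyU_def dest: spec[of _ "degree u"])
  moreover from assms(2) obtain p where "u = pcompose p w"
    by (auto simp: polyW_def)
  then have "degree u = degree p * degree w"
    by (simp add: degree_pcompose)
  ultimately show False
    by simp
qed

lemma polyU_polyW_decomp_unique:
  assumes "u1 \<in> polyU w" "v1 \<in> polyW w" "u2 \<in> polyU w" "v2 \<in> polyW w"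
    and "u1 + v1 = u2 + v2"
  shows "u1 = u2"
proof -
  have "u1 - u2 = v2 - v1"
    using assms(5) by (simp add: algebra_simps)
  moreover have "u1 - u2 \<in> polyU w" "v2 - v1 \<in> polyW w"
    using assms by (simp_all add: polyU_diff polyW_diff)
  ultimately show ?thesis
    using polyU_inter_polyW by fastforce
qed

lemma degree_diff_less_if_coeff_eq:
  assumes "0 < n" "degree p \<le> n" "degree q \<le> n" "coeff p n = coeff q n"
  shows "degree (p - q) < n"
proof (rule degree_lessI)
  show "\<forall>k\<ge>n. coeff (p - q) k = 0"
    using assms(2-4) by (auto simp: le_less coeff_eq_0)
qed (use assms(1) in simp)

lemma top_term_in_polyU_or_polyW:
  assumes "0 < n"
  obtains h where "degree h \<le> n" "coeff h n = c" "h \<in> polyU w \<or> h \<in> polyW w"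
proof (cases "degree w dvd n")
  case True
  then obtain k where k: "n = degree w * k" ..
  with assms have "w \<noteq> 0"
    by auto
  with k have "degree (w ^ k) = n"
    by (simp add: degree_power_eq)
  moreover from this have "coeff (w ^ k) n = lead_coeff w ^ k"
    by (metis lead_coeff_power)
  ultimately show ?thesis
    using \<open>w \<noteq> 0\<close> by (intro that[of "smult (c / lead_coeff w ^ k) (w ^ k)"])
      (simp_all add: smult_power_in_polyW)
next
  case False
  with assms show ?thesis
    by (intro that[of "monom c n"]) (simp_all add: degree_monom_le monom_in_polyU)
qed

lemma polyU_polyW_decomp_exists:
  obtains u v where "u \<in> polyU w" "v \<in> polyW w" "f = u + v" "degree u \<le> degree f"
proof (induction "degree f" arbitrary: f thesis rule: less_induct)
  case less
  show ?case
  proof (cases "degree f = 0")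
    case True
    then have "f \<in> polyW w"
      using const_in_polyW by (metis degree_0_id)
    then show ?thesis
      by (intro less.prems[of 0 f]) (simp_all add: zero_in_polyU)
  next
    case False
    then obtain h where h: "degree h \<le> degree f" "coeff h (degree f) = lead_coeff f"
      "h \<in> polyU w \<or> h \<in> polyW w"
      using top_term_in_polyU_or_polyW by blast
    with False have "degree (f - h) < degree f"
      by (simp add: degree_diff_less_if_coeff_eq)
    then obtain u v where uv: "u \<in> polyU w" "v \<in> polyW w" "f - h = u + v"
        "degree u \<le> degree (f - h)"
      using less.hyps by blast
    from uv(3) have f: "f = u + v + h"
      by (simp add: diff_eq_eq)
    from h(3) show ?thesis
    proof
      assume "h \<in> polyU w"
      show ?thesis
      proof (rule less.prems)
        show "u + h \<in> polyU w"
          using uv(1) \<open>h \<in> polyU w\<close> by (rule polyU_add)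
        show "degree (u + h) \<le> degree f"
          using uv(4) h(1) \<open>degree (f - h) < degree f\<close> by (simp add: degree_add_le)
      qed (use uv(2) f in \<open>simp_all add: algebra_simps\<close>)
    next
      assume "h \<in> polyW w"
      show ?thesis
      proof (rule less.prems)
        show "v + h \<in> polyW w"
          using uv(2) \<open>h \<in> polyW w\<close> by (rule polyW_add)
        show "degree u \<le> degree f"
          using uv(4) \<open>degree (f - h) < degree f\<close> by simp
      qed (use uv(1) f in \<open>simp_all add: algebra_simps\<close>)
    qed
  qed
qed

lemma Ucomp_eqI:
  assumes "u \<in> polyU w" "f - u \<in> polyW w"
  shows "Ucomp w f = u"
  unfolding Ucomp_def
proof (rule the_equality)
  fix u' assume "u' \<in> polyU w \<and> f - u' \<in> polyW w"
  with assms show "u' = u"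
    using polyU_polyW_decomp_unique[of u' w "f - u'" u "f - u"] by simp
qed (use assms in simp)

lemma ell_le_degree: "ell w f \<le> degree f"
proof -
  obtain u v where "u \<in> polyU w" "v \<in> polyW w" "f = u + v" "degree u \<le> degree f"
    by (rule polyU_polyW_decomp_exists)
  then show ?thesis
    using Ucomp_eqI[of u w f] by (simp add: ell_def)
qed

lemma Ucomp_diff_polyW:
  assumes "f - g \<in> polyW w"
  shows "Ucomp w f = Ucomp w g"
proof -
  obtain u v where u: "u \<in> polyU w" and v: "v \<in> polyW w" and "f = u + v"
    by (rule polyU_polyW_decomp_exists)
  then have "g - u = v - (f - g)"
    by (simp add: algebra_simps)
  moreover have "v - (f - g) \<in> polyW w"
    using v assms by (rule polyW_diff)
  ultimately have "g - u \<in> polyW w"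
    by (simp only:)
  with u have "Ucomp w g = u"
    by (rule Ucomp_eqI)
  moreover have "Ucomp w f = u"
    using u v \<open>f = u + v\<close> by (simp add: Ucomp_eqI)
  ultimately show ?thesis
    by simp
qed

theorem lemma3p8:
  fixes w :: "'a::field poly"
  assumes "degree w \<ge> 2"
  shows "(\<forall>f. \<exists>!p. fst p \<in> polyU w \<and> snd p \<in> polyW w \<and> f = fst p + snd p)
       \<and> (\<forall>f. f \<noteq> 0 \<longrightarrow> ell w f \<le> degree f)
       \<and> (\<forall>f g. f - g \<in> polyW w \<longrightarrow> ell w f = ell w g)"
proof (intro conjI allI impI)
  fix f :: "'a poly"
  obtain u v where uv: "u \<in> polyU w" "v \<in> polyW w" "f = u + v"
    by (rule polyU_polyW_decomp_exists)
  show "\<exists>!p. fst p \<in> polyU w \<and> snd p \<in> polyW w \<and> f = fst p + snd p"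
  proof (rule ex1I[of _ "(u, v)"])
    fix p assume "fst p \<in> polyU w \<and> snd p \<in> polyW w \<and> f = fst p + snd p"
    with uv show "p = (u, v)"
      using polyU_polyW_decomp_unique[of "fst p" w "snd p" u v] by (auto simp: prod_eq_iff)
  qed (use uv in simp)
next
  show "ell w f \<le> degree f" for f :: "'a poly"
    by (rule ell_le_degree)
next
  show "ell w f = ell w g" if "f - g \<in> polyW w" for f g :: "'a poly"
    using Ucomp_diff_polyW[OF that] by (simp add: ell_def)
qed

end
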